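(* Consider a continuous nondecreasing function $\varphi:[0,\infty)\to\mathbb{R}$ with $\varphi(0)=0$. If the sum $\sum_{i,j} m_{i,j}\varphi(2^{-j})$ converges, then with probability one, \[ \sum_{(i,\lambda)\in\mathrm{M}} \varphi(2^{-j(\lambda)})<\infty. \] If it diverges and $r^d={\rm o}(\varphi(r))$ as $r\to 0$, then the set $L_{\varphi^{1/d}}$ almost surely has full Lebesgue measure in $\mathbb{T}^d$.
   Context: Let $\mathbb{N}_0$ be the nonnegative integers and $\mathcal{I}=\{1,\dots,2^d-1\}$. Let $\phi:\mathbb{R}^d\to\mathbb{T}^d=\mathbb{R}^d/\mathbb{Z}^d$ be the canonical surjection and $\operatorname{dist}$ the quotient distance on $\mathbb{T}^d$. Let $\Lambda$ be the set of dyadic cubes $\lambda=\phi(2^{-j}(k+[0,1)^d))$, $j\in\mathbb{N}_0$, $k\in\{0,\dots,2^j-1\}^d$; write $j(\lambda)=j$ (the generation) and $x_\lambda=\phi(k2^{-j})$. Fix integers $m_{i,j}\in\{0,\dots,2^{dj}\}$ for $(i,j)\in\mathcal{I}\times\mathbb{N}_0$. Let $(X_{i,n})_{(i,n)\in\mathcal{I}\times\mathbb{N}_0}$ be i.i.d. random points of $\mathbb{T}^d$ with law the Lebesgue measure; $\mathcal{N}_i=\{0,\dots,-1+\sum_j m_{i,j}\}$ if this sum is finite, else $\mathbb{N}_0$; $j_{i,n}=\min\{j\in\mathbb{N}_0: n<\sum_{j'=0}^j m_{i,j'}\}$; $\lambda_{i,n}$ the dyadic cube of generation $j_{i,n}$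 containing $X_{i,n}$; $\mathrm{M}=\{(i,\lambda)\in\mathcal{I}\times\Lambda:\exists n\in\mathcal{N}_i,\ \lambda=\lambda_{i,n}\}$ (the index set of nonvanishing coefficients of the lacunary wavelet series). For a continuous nondecreasing $\psi:[0,\infty)\to\mathbb{R}$ with $\psi(0)=0$, $L_\psi=\{x\in\mathbb{T}^d: \operatorname{dist}(x,x_\lambda)<\psi(2^{-j(\lambda)})\text{ for infinitely many }(i,\lambda)\in\mathrm{M}\}$. *)

theory Defs
  imports "HOL-Probability.Probability"
begin

text \<open>Points of the torus T^d are represented by their representatives in [0,1)^d.\<close>
definition unit_cube :: "(real^'d) set" where
  "unit_cube = {x. \<forall>l. 0 \<le> x$l \<and> x$l < 1}"

definition tdist :: "real^'d \<Rightarrow> real^'d \<Rightarrow> real" where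
  "tdist x y = (INF z\<in>{z::real^'d. \<forall>l. z$l \<in> \<int>}. dist x (y + z))"

definition idx_set :: "nat \<Rightarrow> nat set" where
  "idx_set d = {1..2^d - 1}"

definition cum :: "(nat \<Rightarrow> nat \<Rightarrow> nat) \<Rightarrow> nat \<Rightarrow> nat \<Rightarrow> nat" where
  "cum m i j = (\<Sum>j'\<le>j. m i j')"

definition Nset :: "(nat \<Rightarrow> nat \<Rightarrow> nat) \<Rightarrow> nat \<Rightarrow> nat set" where
  "Nset m i = {n. \<exists>j. n < cum m i j}"

definition jgen :: "(nat \<Rightarrow> nat \<Rightarrow> nat) \<Rightarrow> nat \<Rightarrow> nat \<Rightarrow> nat" where
  "jgen m i n = (LEAST j. n < cum m i j)"

definition dyad_index :: "nat \<Rightarrow> real^'d \<Rightarrow> ('d \<Rightarrow> int)" where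
  "dyad_index j x = (\<lambda>l. \<lfloor>2^j * frac (x$l)\<rfloor>)"

definition dyad_point :: "nat \<Rightarrow> ('d \<Rightarrow> int) \<Rightarrow> real^'d" where
  "dyad_point j k = (\<chi> l. real_of_int (k l) / 2^j)"

text \<open>The random index set M; a dyadic cube is encoded by (j, k).\<close>
definition Mset :: "(nat \<Rightarrow> nat \<Rightarrow> nat) \<Rightarrow> (nat \<Rightarrow> nat \<Rightarrow> 'w \<Rightarrow> real^'d) \<Rightarrow> 'w
    \<Rightarrow> (nat \<times> nat \<times> ('d \<Rightarrow> int)) set" where
  "Mset m X \<omega> = {(i, j, k). i \<in> idx_set CARD('d) \<and>
      (\<exists>n\<in>Nset m i. j = jgen m i n \<and> k = dyad_index j (X i n \<omega>))}"

definition Lset :: "(real \<Rightarrow> real) \<Rightarrow> (nat \<Rightarrow> nat \<Rightarrow> nat) \<Rightarrow> (nat \<Rightarrow> nat \<Rightarrow> 'w \<Rightarrow> real^'d)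
    \<Rightarrow> 'w \<Rightarrow> (real^'d) set" where
  "Lset \<psi> m X \<omega> = {x \<in> unit_cube. infinite {(i, j, k) \<in> Mset m X \<omega>.
      tdist x (dyad_point j k) < \<psi> ((1/2)^j)}}"

end

theory Submission
  imports Defs
begin

text \<open>
  Generation j of index i consists of exactly m i j draws, so summing \<phi>(2^-j) over the draws
  gives \<Sum> m i j \<phi>(2^-j); several draws may land in the same dyadic cube, so the sum over M is
  at most this. The convergent case is therefore deterministic.

  In the divergent case fix x. A draw of generation j lands in a cube whose corner lies within
  \<phi>(2^-j)^(1/d) of x with probability at least a constant times \<phi>(2^-j): since r^d = o(\<phi> r),
  this radius eventually dominates the side 2^-j of the cube. These events are independent with
  non-summable probabilities, so by the second Borel-Cantelli lemma almost surely infinitely many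
  of them occur, and as each cube receives only finitely many draws, x lies in L. Fubini's theorem
  turns "for every x, almost surely" into "almost surely, for almost every x".
\<close>

lemma cum_mono: "j \<le> j' \<Longrightarrow> cum m i j \<le> cum m i j'"
  unfolding cum_def by (intro sum_mono2) auto

lemma jgen_eqI:
  assumes "n < cum m i j" and "j = 0 \<or> cum m i (j - 1) \<le> n"
  shows "jgen m i n = j"
  unfolding jgen_def
proof (rule Least_equality)
  show "n < cum m i j" by fact
  fix j' assume j': "n < cum m i j'"
  show "j \<le> j'"
  proof (rule ccontr)
    assume "\<not> j \<le> j'"
    then have "cum m i j' \<le> cum m i (j - 1)" by (intro cum_mono) simp
    with j' assms(2) \<open>\<not> j \<le> j'\<close> show False by auto
  qed
qed

lemma less_cum_jgen: "n \<in> Nset m i \<Longrightarrow> n < cum m i (jgen m i n)"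
  unfolding Nset_def jgen_def by (auto intro: LeastI)

lemma sum_lessThan_cum_jgen:
  "(\<Sum>n<cum m i J. h (jgen m i n)) = (\<Sum>j\<le>J. real (m i j) * h j)"
proof (induction J)
  case 0
  have "(\<Sum>n<cum m i 0. h (jgen m i n)) = (\<Sum>n<cum m i 0. h 0)"
    by (intro sum.cong refl) (auto intro!: arg_cong[where f=h] jgen_eqI)
  then show ?case by (simp add: cum_def)
next
  case (Suc J)
  have split: "{..<cum m i (Suc J)} = {..<cum m i J} \<union> {cum m i J..<cum m i (Suc J)}"
    using cum_mono[of J "Suc J" m i] by auto
  have "(\<Sum>n\<in>{cum m i J..<cum m i (Suc J)}. h (jgen m i n))
      = (\<Sum>n\<in>{cum m i J..<cum m i (Suc J)}. h (Suc J))"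
    by (intro sum.cong refl) (auto intro!: arg_cong[where f=h] jgen_eqI)
  also have "\<dots> = real (m i (Suc J)) * h (Suc J)" by (simp add: cum_def)
  finally show ?case
    using Suc by (subst split, subst sum.union_disjoint) auto
qed

lemma nonneg_summable_on_iff_bdd_exhaustion:
  fixes f :: "'a \<Rightarrow> real"
  assumes nonneg: "\<And>x. x \<in> A \<Longrightarrow> 0 \<le> f x"
    and K: "\<And>J. finite (K J)" "\<And>J. K J \<subseteq> A"
    and exhaust: "\<And>F. finite F \<Longrightarrow> F \<subseteq> A \<Longrightarrow> \<exists>J. F \<subseteq> K J"
  shows "f summable_on A \<longleftrightarrow> bdd_above (range (\<lambda>J. sum f (K J)))"
proof
  assume "f summable_on A"
  then have "sum f (K J) \<le> infsum f A" for J
    by (rule finite_sum_le_infsum) (use K nonneg in auto)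
  then show "bdd_above (range (\<lambda>J. sum f (K J)))"
    by (rule bdd_aboveI2)
next
  assume "bdd_above (range (\<lambda>J. sum f (K J)))"
  then obtain C where C: "\<And>J. sum f (K J) \<le> C" by (auto simp: bdd_above_def)
  have "sum f F \<le> C" if F: "finite F" "F \<subseteq> A" for F
  proof -
    obtain J where "F \<subseteq> K J" using exhaust[OF F] by blast
    then have "sum f F \<le> sum f (K J)"
      by (rule sum_mono2[OF K(1)]) (use K(2) nonneg in auto)
    with C[of J] show ?thesis by linarith
  qed
  then have "bdd_above (sum f ` {F. F \<subseteq> A \<and> finite F})"
    by (intro bdd_aboveI2[where M=C]) auto
  then show "f summable_on A"
    using nonneg by (rule nonneg_bdd_above_summable_on[rotated])
qed

lemma summable_on_jgen_iff:
  assumes "finite I" and nonneg: "\<And>j. 0 \<le> h j"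
  shows "(\<lambda>(i, n). h (jgen m i n)) summable_on (SIGMA i:I. Nset m i)
     \<longleftrightarrow> (\<lambda>(i, j). real (m i j) * h j) summable_on (I \<times> UNIV)"
proof -
  have draws: "(\<lambda>(i, n). h (jgen m i n)) summable_on (SIGMA i:I. Nset m i)
      \<longleftrightarrow> bdd_above (range (\<lambda>J. \<Sum>(i, n)\<in>(SIGMA i:I. {..<cum m i J}). h (jgen m i n)))"
  proof (rule nonneg_summable_on_iff_bdd_exhaustion)
    fix F assume F: "finite F" "F \<subseteq> (SIGMA i:I. Nset m i)"
    define J where "J = Max ((\<lambda>(i, n). jgen m i n) ` F)"
    have "n < cum m i J" if n: "(i, n) \<in> F" for i n
    proof -
      have "jgen m i n \<le> J"
        unfolding J_def by (rule Max_ge) (use F(1) n in force)+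
      moreover have "n < cum m i (jgen m i n)"
        using F(2) n by (intro less_cum_jgen) auto
      ultimately show ?thesis
        using cum_mono[of "jgen m i n" J m i] by linarith
    qed
    then show "\<exists>J. F \<subseteq> (SIGMA i:I. {..<cum m i J})"
      using F(2) by blast
  qed (use assms in \<open>auto simp: Nset_def\<close>)
  have levels: "(\<lambda>(i, j). real (m i j) * h j) summable_on (I \<times> UNIV)
      \<longleftrightarrow> bdd_above (range (\<lambda>J. \<Sum>(i, j)\<in>I \<times> {..J}. real (m i j) * h j))"
  proof (rule nonneg_summable_on_iff_bdd_exhaustion)
    fix F assume F: "finite F" "F \<subseteq> I \<times> (UNIV :: nat set)"
    have "F \<subseteq> I \<times> {..Max (snd ` F)}"
      using F by (force intro: Max_ge)
    then show "\<exists>J. F \<subseteq> I \<times> {..J}" by blast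
  qed (use assms in auto)
  have truncations: "(\<Sum>(i, n)\<in>(SIGMA i:I. {..<cum m i J}). h (jgen m i n))
      = (\<Sum>(i, j)\<in>I \<times> {..J}. real (m i j) * h j)" for J
  proof -
    have "(\<Sum>(i, n)\<in>(SIGMA i:I. {..<cum m i J}). h (jgen m i n))
        = (\<Sum>i\<in>I. \<Sum>n<cum m i J. h (jgen m i n))"
      by (rule sum.Sigma[symmetric]) (use \<open>finite I\<close> in auto)
    also have "\<dots> = (\<Sum>i\<in>I. \<Sum>j\<le>J. real (m i j) * h j)"
      by (simp only: sum_lessThan_cum_jgen)
    also have "\<dots> = (\<Sum>(i, j)\<in>I \<times> {..J}. real (m i j) * h j)"
      by (rule sum.Sigma) (use \<open>finite I\<close> in auto)
    finally show ?thesis .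
  qed
  show ?thesis
    unfolding draws levels truncations ..
qed

lemma summable_on_image:
  fixes f :: "'b \<Rightarrow> 'c :: banach"
  assumes "(f \<circ> g) summable_on A"
  shows "f summable_on (g ` A)"
proof -
  define B where "B = inv_into A g ` g ` A"
  have "B \<subseteq> A"
    unfolding B_def by (auto intro: inv_into_into)
  have "g ` B = g ` A"
    unfolding B_def by (rule image_inv_into_cancel) auto
  have "inj_on g B"
  proof (rule inj_onI)
    fix x y assume "x \<in> B" "y \<in> B" "g x = g y"
    then show "x = y" unfolding B_def by (auto simp: f_inv_into_f)
  qed
  have "(f \<circ> g) summable_on B"
    using assms \<open>B \<subseteq> A\<close> by (rule summable_on_subset_banach)
  then have "f summable_on g ` B"
    using \<open>inj_on g B\<close> by (simp add: summable_on_reindex)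
  then show ?thesis
    using \<open>g ` B = g ` A\<close> by simp
qed

lemma (in prob_space) prob_space_diff_UN_le_exp:
  assumes "finite F" and events: "\<And>t. t \<in> F \<Longrightarrow> E t \<in> events"
    and indep: "indep_events (\<lambda>t. space M - E t) F"
  shows "prob (space M - (\<Union>t\<in>F. E t)) \<le> exp (- (\<Sum>t\<in>F. prob (E t)))"
proof (cases "F = {}")
  case False
  have "space M - (\<Union>t\<in>F. E t) = (\<Inter>t\<in>F. space M - E t)"
    using False by auto
  then have "prob (space M - (\<Union>t\<in>F. E t)) = (\<Prod>t\<in>F. prob (space M - E t))"
    using indep \<open>finite F\<close> False by (simp add: indep_events_def)
  also have "\<dots> = (\<Prod>t\<in>F. 1 - prob (E t))"
    using events by (intro prod.cong refl prob_compl) auto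
  also have "\<dots> \<le> (\<Prod>t\<in>F. exp (- prob (E t)))"
    by (intro prod_mono conjI) (auto simp: exp_ge_add_one_self[of "- prob _", simplified])
  also have "\<dots> = exp (- (\<Sum>t\<in>F. prob (E t)))"
    using \<open>finite F\<close> by (simp add: exp_sum sum_negf[symmetric])
  finally show ?thesis .
qed simp

lemma (in prob_space) prob_space_diff_UN_eq_0:
  assumes "countable T" and events: "\<And>t. t \<in> T \<Longrightarrow> E t \<in> events"
    and indep: "indep_events (\<lambda>t. space M - E t) T"
    and divergent: "\<not> (\<lambda>t. prob (E t)) summable_on T"
  shows "prob (space M - (\<Union>t\<in>T. E t)) = 0"
proof -
  let ?B = "space M - (\<Union>t\<in>T. E t)"
  have "\<not> bdd_above ((\<lambda>F. \<Sum>t\<in>F. prob (E t)) ` {F. F \<subseteq> T \<and> finite F})"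
    using divergent nonneg_bdd_above_summable_on[of T "\<lambda>t. prob (E t)"] by auto
  then have small: "prob ?B \<le> exp (- K)" for K
  proof -
    obtain F where F: "F \<subseteq> T" "finite F" "K < (\<Sum>t\<in>F. prob (E t))"
      using \<open>\<not> bdd_above _\<close> by (auto simp: bdd_above_def not_le)
    have "prob ?B \<le> prob (space M - (\<Union>t\<in>F. E t))"
      using F events by (intro finite_measure_mono) auto
    also have "\<dots> \<le> exp (- (\<Sum>t\<in>F. prob (E t)))"
      using F events indep
      by (intro prob_space_diff_UN_le_exp) (auto simp: indep_events_def_alt intro: indep_sets_mono_index)
    also have "\<dots> \<le> exp (- K)"
      using F by simp
    finally show ?thesis .
  qed
  show ?thesis
  proof (rule ccontr)
    assume "prob ?B \<noteq> 0"
    then have pos: "0 < prob ?B"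
      using measure_nonneg[of M ?B] by linarith
    have "prob ?B \<le> exp (- (1 - ln (prob ?B)))"
      by (rule small)
    also have "\<dots> = prob ?B / exp 1"
      using pos by (simp add: exp_diff)
    also have "\<dots> < prob ?B"
      using pos by (simp add: divide_less_eq)
    finally show False by simp
  qed
qed

lemma (in prob_space) borel_cantelli_AE2:
  assumes "countable T" and events: "\<And>t. t \<in> T \<Longrightarrow> E t \<in> events"
    and indep: "indep_events (\<lambda>t. space M - E t) T"
    and divergent: "\<not> (\<lambda>t. prob (E t)) summable_on T"
  shows "AE \<omega> in M. infinite {t\<in>T. \<omega> \<in> E t}"
proof -
  have "AE \<omega> in M. \<exists>t\<in>T - G. \<omega> \<in> E t" if "finite G" for G
  proof -
    have "countable (T - G)"
      using \<open>countable T\<close> by (rule countable_subset[rotated]) auto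
    then have "space M - (\<Union>t\<in>T - G. E t) \<in> events"
      using events by (intro sets.Diff sets.countable_UN') auto
    moreover have "\<not> (\<lambda>t. prob (E t)) summable_on (T - G)"
    proof
      assume "(\<lambda>t. prob (E t)) summable_on (T - G)"
      then have "(\<lambda>t. prob (E t)) summable_on ((T - G) \<union> (T \<inter> G))"
        using \<open>finite G\<close> by (intro summable_on_union) auto
      then show False
        using divergent by (simp add: Un_Diff_Int)
    qed
    then have "prob (space M - (\<Union>t\<in>T - G. E t)) = 0"
      using \<open>countable (T - G)\<close> events indep
      by (intro prob_space_diff_UN_eq_0) (auto simp: indep_events_def_alt intro: indep_sets_mono_index)
    ultimately show ?thesis
      by (intro AE_iff_measurable[THEN iffD2]) (auto simp: emeasure_eq_measure)
  qed
  then have "AE \<omega> in M. \<forall>G\<in>{G. finite G \<and> G \<subseteq> T}. \<exists>t\<in>T - G. \<omega> \<in> E t"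
    using \<open>countable T\<close> countable_Collect_finite_subset by (intro AE_ball_countable') auto
  then show ?thesis
  proof (rule eventually_mono)
    fix \<omega> assume "\<forall>G\<in>{G. finite G \<and> G \<subseteq> T}. \<exists>t\<in>T - G. \<omega> \<in> E t"
    then show "infinite {t\<in>T. \<omega> \<in> E t}"
      by (metis (mono_tags, lifting) Diff_iff mem_Collect_eq subsetI)
  qed
qed

lemma tdist_eq_infdist: "tdist x y = infdist (x - y) {z :: real^'d. \<forall>l. z $ l \<in> \<int>}"
proof -
  have "{z :: real^'d. \<forall>l. z $ l \<in> \<int>} \<noteq> {}"
    by (auto intro!: exI[of _ 0])
  then show ?thesis
    unfolding tdist_def by (simp add: infdist_notempty dist_norm algebra_simps)
qed

lemma tdist_le_dist: "tdist x y \<le> dist x y"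
proof -
  have "tdist x y \<le> dist (x - y) 0"
    unfolding tdist_eq_infdist by (rule infdist_le) simp
  then show ?thesis by (simp add: dist_norm)
qed

lemma continuous_on_tdist:
  "continuous_on UNIV (\<lambda>p :: (real^'d) \<times> (real^'d). tdist (fst p) (snd p))"
  unfolding tdist_eq_infdist by (intro continuous_intros)

lemma borel_measurable_dyad_point_index[measurable]:
  "(\<lambda>y :: real^'d. dyad_point j (dyad_index j y)) \<in> borel_measurable borel"
proof -
  have "(\<lambda>y :: real^'d. dyad_point j (dyad_index j y) $ l) \<in> borel_measurable borel" for l
    unfolding dyad_point_def dyad_index_def frac_def by simp measurable
  then show ?thesis
    by (subst borel_measurable_euclidean_space) (auto simp: Basis_vec_def inner_axis)
qed

lemma sets_unit_cube[measurable]: "(unit_cube :: (real^'d) set) \<in> sets borel"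
proof -
  have "(unit_cube :: (real^'d) set) = (\<Inter>l. {x. 0 \<le> x $ l} \<inter> {x. x $ l < 1})"
    unfolding unit_cube_def by auto
  also have "\<dots> \<in> sets borel" by measurable
  finally show ?thesis .
qed

lemma abs_dyad_point_index_diff_le:
  assumes "y \<in> unit_cube"
  shows "\<bar>y $ l - dyad_point j (dyad_index j y) $ l\<bar> \<le> (1/2) ^ j"
proof -
  have "frac (y $ l) = y $ l"
    using assms unfolding unit_cube_def by (auto intro: frac_eq[THEN iffD2])
  then have eq: "dyad_point j (dyad_index j y) $ l = real_of_int \<lfloor>2 ^ j * y $ l\<rfloor> / 2 ^ j"
    unfolding dyad_point_def dyad_index_def by simp
  have "\<bar>2 ^ j * y $ l - real_of_int \<lfloor>2 ^ j * y $ l\<rfloor>\<bar> \<le> 1"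
    by linarith
  then have "\<bar>y $ l - real_of_int \<lfloor>2 ^ j * y $ l\<rfloor> / 2 ^ j\<bar> \<le> 1 / 2 ^ j"
    by (simp add: field_simps abs_div_pos[symmetric] divide_le_eq)
  then show ?thesis
    unfolding eq by (simp add: power_one_over)
qed

lemma box_in_unit_cube:
  fixes x :: "real^'d"
  assumes x: "x \<in> unit_cube" and s: "0 < s" "s \<le> 1/2"
  obtains B where "B \<in> sets borel" "B \<subseteq> unit_cube" "emeasure lborel B = ennreal (s ^ CARD('d))"
    "\<And>y l. y \<in> B \<Longrightarrow> \<bar>y $ l - x $ l\<bar> \<le> s"
proof
  define a :: "real^'d" where "a = (\<chi> l. if x $ l \<ge> 1/2 then x $ l - s else x $ l)"
  define b :: "real^'d" where "b = (\<chi> l. a $ l + s)"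
  have x01: "0 \<le> x $ l" "x $ l < 1" for l
    using x unfolding unit_cube_def by auto
  have box: "y \<in> cbox a b \<longleftrightarrow> (\<forall>l. a $ l \<le> y $ l \<and> y $ l \<le> a $ l + s)" for y
    unfolding mem_box_cart b_def by simp
  show "cbox a b \<in> sets borel" by simp
  show "cbox a b \<subseteq> unit_cube"
  proof
    fix y assume "y \<in> cbox a b"
    then have y: "a $ l \<le> y $ l" "y $ l \<le> a $ l + s" for l
      unfolding box by auto
    have "0 \<le> y $ l \<and> y $ l < 1" for l
      using y[of l] x01[of l] s unfolding a_def by (cases "1/2 \<le> x $ l") auto
    then show "y \<in> unit_cube"
      unfolding unit_cube_def by auto
  qed
  show "\<bar>y $ l - x $ l\<bar> \<le> s" if "y \<in> cbox a b" for y l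
  proof -
    have "a $ l \<le> y $ l \<and> y $ l \<le> a $ l + s"
      using that unfolding box by auto
    then show ?thesis
      using s unfolding a_def by (auto split: if_splits)
  qed
  have "cbox a b \<noteq> {}"
    using s box[of a] by auto
  then have "measure lborel (cbox a b) = s ^ CARD('d)"
    by (simp add: content_cbox_cart b_def)
  then show "emeasure lborel (cbox a b) = ennreal (s ^ CARD('d))"
    using emeasure_lborel_cbox_finite[of a b] by (simp add: emeasure_eq_ennreal_measure)
qed

lemma prob_tdist_dyad_point_less_ge:
  fixes Y :: "'w \<Rightarrow> real^'d" and x :: "real^'d"
  assumes "prob_space M" and uniform: "distributed M lborel Y (\<lambda>x. indicator unit_cube x)"
    and x: "x \<in> unit_cube" and "\<rho> \<le> 1" and fine: "2 * CARD('d) * (1/2) ^ j < \<rho>"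
  shows "(\<rho> / (2 * CARD('d))) ^ CARD('d)
    \<le> measure M {\<omega>\<in>space M. tdist x (dyad_point j (dyad_index j (Y \<omega>))) < \<rho>}"
proof -
  interpret prob_space M by fact
  define s where "s = \<rho> / (2 * CARD('d))"
  define S where "S = {y. tdist x (dyad_point j (dyad_index j y)) < \<rho>}"
  have "0 < 2 * CARD('d) * (1/2 :: real) ^ j" by simp
  then have "0 < \<rho>" using fine by linarith
  moreover have "\<rho> \<le> real CARD('d)"
    using \<open>\<rho> \<le> 1\<close> card_ge_0_finite[of UNIV] by (simp add: order.trans[of _ 1])
  ultimately have s: "0 < s" "s \<le> 1/2"
    unfolding s_def by (auto simp: field_simps)
  obtain B where B: "B \<in> sets borel" "B \<subseteq> unit_cube" "emeasure lborel B = ennreal (s ^ CARD('d))"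
    "\<And>y l. y \<in> B \<Longrightarrow> \<bar>y $ l - x $ l\<bar> \<le> s"
    using box_in_unit_cube[OF x s] by blast
  have "B \<subseteq> S"
  proof
    fix y assume y: "y \<in> B"
    have "tdist x (dyad_point j (dyad_index j y)) \<le> (\<Sum>l\<in>UNIV. \<bar>(x - dyad_point j (dyad_index j y)) $ l\<bar>)"
      using tdist_le_dist norm_le_l1_cart unfolding dist_norm by (rule order_trans)
    also have "\<dots> \<le> (\<Sum>l\<in>(UNIV :: 'd set). s + (1/2) ^ j)"
    proof (rule sum_mono)
      fix l
      show "\<bar>(x - dyad_point j (dyad_index j y)) $ l\<bar> \<le> s + (1/2) ^ j"
        using B(4)[OF y, of l] abs_dyad_point_index_diff_le[of y l j] B(2) y by auto
    qed
    also have "\<dots> < \<rho>"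
      using fine unfolding s_def by (simp add: field_simps)
    finally show "y \<in> S" unfolding S_def by simp
  qed
  have "S \<in> sets borel"
    unfolding S_def
    using borel_measurable_continuous_Pair[OF measurable_const[of x]
        borel_measurable_dyad_point_index[of j] continuous_on_tdist]
    by measurable
  moreover have Y: "Y \<in> borel_measurable M"
    using distributed_measurable[OF uniform] by (simp add: measurable_lborel1)
  ultimately have "Y -` S \<inter> space M \<in> events"
    by (intro measurable_sets)
  have "emeasure M (Y -` B \<inter> space M) = (\<integral>\<^sup>+y. indicator unit_cube y * indicator B y \<partial>lborel)"
    using B by (intro distributed_emeasure[OF uniform]) auto
  also have "\<dots> = (\<integral>\<^sup>+y. indicator B y \<partial>lborel)"
    using B(2) by (intro nn_integral_cong) (auto simp: indicator_def)
  also have "\<dots> = ennreal (s ^ CARD('d))"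
    using B by simp
  finally have "s ^ CARD('d) = prob (Y -` B \<inter> space M)"
    using B s by (simp add: emeasure_eq_measure)
  also have "\<dots> \<le> prob (Y -` S \<inter> space M)"
    using \<open>B \<subseteq> S\<close> \<open>Y -` S \<inter> space M \<in> events\<close> by (intro finite_measure_mono) auto
  finally show ?thesis
    unfolding s_def S_def by (simp add: vimage_def Int_def conj_commute)
qed

lemma powr_inverse_power:
  fixes y :: real
  assumes "0 \<le> y" "0 < d"
  shows "(y powr (1 / real d)) ^ d = y"
  using assms by (simp add: powr_realpow'[symmetric] powr_powr)

lemma power_powr_inverse:
  fixes y :: real
  assumes "0 \<le> y" "0 < d"
  shows "(y ^ d) powr (1 / real d) = y"
  using assms by (simp add: powr_realpow'[symmetric] powr_powr)

lemma eventually_dyadic_radius: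
  fixes \<phi> :: "real \<Rightarrow> real" and d :: nat
  assumes cont: "continuous_on {0..} \<phi>" and "\<phi> 0 = 0"
    and nonneg: "\<And>r. 0 \<le> r \<Longrightarrow> 0 \<le> \<phi> r"
    and small: "(\<lambda>r. r ^ d) \<in> o[at_right 0](\<phi>)" and "0 < d"
  shows "eventually (\<lambda>j. \<phi> ((1/2) ^ j) \<le> 1
    \<and> 2 * d * (1/2) ^ j < \<phi> ((1/2) ^ j) powr (1 / d)) sequentially"
proof -
  define c where "c = 1 / (2 * (2 * real d) ^ d)"
  have "0 < c" using \<open>0 < d\<close> unfolding c_def by simp
  have dyadic: "((\<lambda>j. (1/2) ^ j) \<longlongrightarrow> (0 :: real)) sequentially"
    by (rule LIMSEQ_realpow_zero) auto
  then have "filterlim (\<lambda>j. (1/2 :: real) ^ j) (at_right 0) sequentially"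
    unfolding filterlim_at by (auto intro!: always_eventually)
  moreover have "eventually (\<lambda>r. norm (r ^ d) \<le> c * norm (\<phi> r)) (at_right 0)"
    using landau_o.smallD[OF small \<open>0 < c\<close>] .
  ultimately have "eventually (\<lambda>j. norm (((1/2 :: real) ^ j) ^ d) \<le> c * norm (\<phi> ((1/2) ^ j)))
      sequentially"
    unfolding filterlim_iff by blast
  then have dominated: "eventually (\<lambda>j. ((1/2) ^ j) ^ d \<le> c * \<phi> ((1/2) ^ j)) sequentially"
    by (rule eventually_mono) (simp add: nonneg abs_of_nonneg)
  have "((\<lambda>j. \<phi> ((1/2) ^ j)) \<longlongrightarrow> \<phi> 0) sequentially"
    by (rule continuous_on_tendsto_compose[OF cont dyadic]) auto
  then have below_one: "eventually (\<lambda>j. \<phi> ((1/2) ^ j) < 1) sequentially"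
    using \<open>\<phi> 0 = 0\<close> by (intro order_tendstoD) auto
  show ?thesis
    using dominated below_one
  proof eventually_elim
    case (elim j)
    define r :: real where "r = (1/2) ^ j"
    have "0 < r" unfolding r_def by simp
    have "0 < c * \<phi> r"
      using elim zero_less_power[OF \<open>0 < r\<close>, of d] unfolding r_def by linarith
    then have "0 < \<phi> r"
      using \<open>0 < c\<close> by (simp add: zero_less_mult_iff)
    have "(2 * real d * r) ^ d = (2 * real d) ^ d * r ^ d"
      by (simp add: power_mult_distrib)
    also have "\<dots> \<le> (2 * real d) ^ d * (c * \<phi> r)"
      using elim unfolding r_def by (intro mult_left_mono) auto
    also have "\<dots> = \<phi> r / 2"
      unfolding c_def using \<open>0 < d\<close> by simp
    also have "\<dots> < \<phi> r"
      using \<open>0 < \<phi> r\<close> by simp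
    finally have "(2 * real d * r) ^ d < \<phi> r" .
    then have "((2 * real d * r) ^ d) powr (1 / d) < \<phi> r powr (1 / d)"
      using \<open>0 < d\<close> \<open>0 < r\<close> by (intro powr_less_mono2) auto
    then have "2 * real d * r < \<phi> r powr (1 / d)"
      using \<open>0 < r\<close> \<open>0 < d\<close> by (simp add: power_powr_inverse)
    then show ?case
      using elim unfolding r_def by simp
  qed
qed

definition draw_cube :: "(nat \<Rightarrow> nat \<Rightarrow> nat) \<Rightarrow> (nat \<Rightarrow> nat \<Rightarrow> 'w \<Rightarrow> real^'d) \<Rightarrow> 'w
    \<Rightarrow> nat \<times> nat \<Rightarrow> nat \<times> nat \<times> ('d \<Rightarrow> int)" where
  "draw_cube m X \<omega> = (\<lambda>(i, n). (i, jgen m i n, dyad_index (jgen m i n) (X i n \<omega>)))"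

lemma Mset_eq_image_draw_cube:
  fixes X :: "nat \<Rightarrow> nat \<Rightarrow> 'w \<Rightarrow> real^'d"
  shows "Mset m X \<omega> = draw_cube m X \<omega> ` (SIGMA i:idx_set CARD('d). Nset m i)"
  unfolding Mset_def draw_cube_def by (auto simp: image_iff)

lemma finite_idx_set: "finite (idx_set d)"
  unfolding idx_set_def by simp

lemma summable_on_Mset:
  fixes X :: "nat \<Rightarrow> nat \<Rightarrow> 'w \<Rightarrow> real^'d"
  assumes "\<And>j. 0 \<le> h j"
    and "(\<lambda>(i, j). real (m i j) * h j) summable_on (idx_set CARD('d) \<times> UNIV)"
  shows "(\<lambda>(i, j, k). h j) summable_on Mset m X \<omega>"
proof -
  have "(\<lambda>(i, j, k). h j) \<circ> draw_cube m X \<omega> = (\<lambda>(i, n). h (jgen m i n))"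
    by (auto simp: draw_cube_def)
  then have "((\<lambda>(i, j, k). h j) \<circ> draw_cube m X \<omega>) summable_on (SIGMA i:idx_set CARD('d). Nset m i)"
    using assms finite_idx_set by (simp add: summable_on_jgen_iff)
  then show ?thesis
    unfolding Mset_eq_image_draw_cube by (rule summable_on_image)
qed

definition hits :: "(real \<Rightarrow> real) \<Rightarrow> (nat \<Rightarrow> nat \<Rightarrow> nat) \<Rightarrow> (nat \<Rightarrow> nat \<Rightarrow> 'w \<Rightarrow> real^'d)
    \<Rightarrow> real^'d \<Rightarrow> 'w \<Rightarrow> (nat \<times> nat) set" where
  "hits \<psi> m X x \<omega> = {(i, n) \<in> (SIGMA i:idx_set CARD('d). Nset m i).
      tdist x (dyad_point (jgen m i n) (dyad_index (jgen m i n) (X i n \<omega>))) < \<psi> ((1/2) ^ jgen m i n)}"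

lemma infinite_hits_imp_mem_Lset:
  assumes "x \<in> unit_cube" and "infinite (hits \<psi> m X x \<omega>)"
  shows "x \<in> Lset \<psi> m X \<omega>"
proof -
  let ?g = "draw_cube m X \<omega>" and ?H = "hits \<psi> m X x \<omega>"
  let ?C = "{(i, j, k) \<in> Mset m X \<omega>. tdist x (dyad_point j k) < \<psi> ((1/2) ^ j)}"
  have image: "?g ` ?H \<subseteq> ?C"
    unfolding hits_def Mset_eq_image_draw_cube by (auto simp: draw_cube_def)
  have fibres: "finite (?g -` {y} \<inter> ?H)" for y
  proof -
    obtain i j k where y: "y = (i, j, k)" by (cases y)
    have "?g -` {y} \<inter> ?H \<subseteq> {i} \<times> {..<cum m i j}"
      using less_cum_jgen unfolding y hits_def draw_cube_def by fastforce
    then show ?thesis by (rule finite_subset) simp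
  qed
  have "infinite ?C"
  proof
    assume "finite ?C"
    then have "finite (?g -` ?C \<inter> ?H)"
      using fibres by (rule finite_finite_vimage_IntI)
    moreover have "?H \<subseteq> ?g -` ?C \<inter> ?H"
      using image by auto
    ultimately show False
      using assms(2) finite_subset by blast
  qed
  then show ?thesis
    using assms(1) unfolding Lset_def by simp
qed

lemma finite_jgen_less:
  assumes "finite I"
  shows "finite {(i, n) \<in> (SIGMA i:I. Nset m i). jgen m i n < J}"
proof (rule finite_subset)
  show "{(i, n) \<in> (SIGMA i:I. Nset m i). jgen m i n < J} \<subseteq> (SIGMA i:I. {..<cum m i J})"
  proof safe
    fix i n assume "n \<in> Nset m i" "jgen m i n < J"
    then show "n < cum m i J"
      using less_cum_jgen[of n m i] cum_mono[of "jgen m i n" J m i] by simp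
  qed
qed (use assms in simp)

lemma not_summable_on_draws_if_dominating:
  assumes "finite I" and nonneg: "\<And>j. 0 \<le> h j" and "0 < c"
    and divergent: "\<not> (\<lambda>(i, j). real (m i j) * h j) summable_on (I \<times> UNIV)"
    and dominating: "\<And>i n. i \<in> I \<Longrightarrow> n \<in> Nset m i \<Longrightarrow> J \<le> jgen m i n \<Longrightarrow> c * h (jgen m i n) \<le> p (i, n)"
  shows "\<not> p summable_on (SIGMA i:I. Nset m i)"
proof
  let ?T = "SIGMA i:I. Nset m i"
  let ?tail = "{(i, n) \<in> ?T. J \<le> jgen m i n}"
  assume "p summable_on ?T"
  then have "p summable_on ?tail"
    by (rule summable_on_subset) auto
  then have "(\<lambda>(i, n). c * h (jgen m i n)) summable_on ?tail"
    by (rule summable_on_comparison_test) (use dominating nonneg \<open>0 < c\<close> in auto)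
  then have "(\<lambda>t. inverse c * (\<lambda>(i, n). c * h (jgen m i n)) t) summable_on ?tail"
    by (rule summable_on_cmult_right)
  moreover have "(\<lambda>t. inverse c * (\<lambda>(i, n). c * h (jgen m i n)) t) = (\<lambda>(i, n). h (jgen m i n))"
    using \<open>0 < c\<close> by (auto simp: fun_eq_iff)
  ultimately have "(\<lambda>(i, n). h (jgen m i n)) summable_on ?tail"
    by simp
  moreover have "(\<lambda>(i, n). h (jgen m i n)) summable_on {(i, n) \<in> ?T. jgen m i n < J}"
    using finite_jgen_less[OF \<open>finite I\<close>] by (rule summable_on_finite)
  ultimately have "(\<lambda>(i, n). h (jgen m i n)) summable_on (?tail \<union> {(i, n) \<in> ?T. jgen m i n < J})"
    by (rule summable_on_union)
  also have "?tail \<union> {(i, n) \<in> ?T. jgen m i n < J} = ?T"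
    by auto
  finally show False
    using divergent summable_on_jgen_iff[where h=h and m=m, OF \<open>finite I\<close> nonneg] by blast
qed

lemma AE_infinite_hits:
  fixes M :: "'w measure" and X :: "nat \<Rightarrow> nat \<Rightarrow> 'w \<Rightarrow> real^'d" and x :: "real^'d"
  assumes "prob_space M"
    and indep: "prob_space.indep_vars M (\<lambda>_. borel) (\<lambda>(i, n). X i n) (idx_set CARD('d) \<times> UNIV)"
    and uniform: "\<And>i n. i \<in> idx_set CARD('d) \<Longrightarrow>
      distributed M lborel (X i n) (\<lambda>x. indicator unit_cube x)"
    and nonneg: "\<And>r. 0 \<le> r \<Longrightarrow> 0 \<le> \<phi> r"
    and radius: "\<And>j. J \<le> j \<Longrightarrow>
      \<phi> ((1/2) ^ j) \<le> 1 \<and> 2 * CARD('d) * (1/2) ^ j < \<phi> ((1/2) ^ j) powr (1 / CARD('d))"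
    and divergent: "\<not> (\<lambda>(i, j). real (m i j) * \<phi> ((1/2) ^ j)) summable_on (idx_set CARD('d) \<times> UNIV)"
    and x: "x \<in> unit_cube"
  shows "AE \<omega> in M. infinite (hits (\<lambda>r. \<phi> r powr (1 / CARD('d))) m X x \<omega>)"
proof -
  interpret prob_space M by fact
  define \<rho> where "\<rho> j = \<phi> ((1/2) ^ j) powr (1 / CARD('d))" for j
  define T where "T = (SIGMA i:idx_set CARD('d). Nset m i)"
  define S where "S = (\<lambda>(i, n). {y. tdist x (dyad_point (jgen m i n) (dyad_index (jgen m i n) y))
    < \<rho> (jgen m i n)})"
  define E where "E t = (\<lambda>(i, n). X i n) t -` S t \<inter> space M" for t
  have "S t \<in> sets borel" for t
    using borel_measurable_continuous_Pair[OF measurable_const[of x]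
        borel_measurable_dyad_point_index continuous_on_tdist]
    by (simp add: S_def split: prod.split) measurable
  moreover have "(\<lambda>(i, n). X i n) t \<in> borel_measurable M" if "t \<in> T" for t
    using that distributed_measurable[OF uniform] unfolding T_def
    by (auto simp: measurable_lborel1)
  ultimately have events: "E t \<in> events" if "t \<in> T" for t
    unfolding E_def using that by (intro measurable_sets)
  have "indep_events (\<lambda>t. space M - E t) T"
  proof (rule indep_eventsI)
    fix F assume "F \<subseteq> T" "finite F" "F \<noteq> {}"
    have compl: "space M - E t = (\<lambda>(i, n). X i n) t -` (- S t) \<inter> space M" for t
      unfolding E_def by auto
    have "F \<subseteq> idx_set CARD('d) \<times> UNIV"
      using \<open>F \<subseteq> T\<close> unfolding T_def by auto
    then have "prob (\<Inter>t\<in>F. (\<lambda>(i, n). X i n) t -` (- S t) \<inter> space M)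
        = (\<Prod>t\<in>F. prob ((\<lambda>(i, n). X i n) t -` (- S t) \<inter> space M))"
      using \<open>finite F\<close> \<open>F \<noteq> {}\<close> \<open>\<And>t. S t \<in> sets borel\<close>
      by (intro indep_varsD[OF indep]) auto
    then show "prob (\<Inter>t\<in>F. space M - E t) = (\<Prod>t\<in>F. prob (space M - E t))"
      unfolding compl .
  qed (use events in auto)
  moreover have "\<not> (\<lambda>t. prob (E t)) summable_on T"
    unfolding T_def
  proof (rule not_summable_on_draws_if_dominating[where c="1 / (2 * CARD('d)) ^ CARD('d)" and J=J])
    fix i n assume t: "i \<in> idx_set CARD('d)" "n \<in> Nset m i" "J \<le> jgen m i n"
    let ?j = "jgen m i n"
    have "\<rho> ?j \<le> 1 powr (1 / CARD('d))"
      using radius[OF t(3)] nonneg unfolding \<rho>_def by (intro powr_mono2) auto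
    then have "\<rho> ?j \<le> 1" by simp
    then have "(\<rho> ?j / (2 * CARD('d))) ^ CARD('d) \<le> prob (E (i, n))"
      using prob_tdist_dyad_point_less_ge[OF \<open>prob_space M\<close> uniform[OF t(1)] x]
        radius[OF t(3)]
      unfolding E_def S_def \<rho>_def by (simp add: vimage_def Int_def conj_commute)
    moreover have "(\<rho> ?j / (2 * CARD('d))) ^ CARD('d) = 1 / (2 * CARD('d)) ^ CARD('d) * \<phi> ((1/2) ^ ?j)"
      unfolding \<rho>_def by (simp add: power_divide powr_inverse_power nonneg)
    ultimately show "1 / (2 * CARD('d)) ^ CARD('d) * \<phi> ((1/2) ^ ?j) \<le> prob (E (i, n))"
      by simp
  qed (use divergent nonneg finite_idx_set in \<open>auto simp:\<close>)
  ultimately have "AE \<omega> in M. infinite {t\<in>T. \<omega> \<in> E t}"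
    using events by (intro borel_cantelli_AE2) (auto simp: T_def)
  then show ?thesis
  proof (rule eventually_mono)
    fix \<omega> assume "infinite {t\<in>T. \<omega> \<in> E t}"
    moreover have "{t\<in>T. \<omega> \<in> E t} \<subseteq> hits (\<lambda>r. \<phi> r powr (1 / CARD('d))) m X x \<omega>"
      unfolding hits_def T_def E_def S_def \<rho>_def by auto
    ultimately show "infinite (hits (\<lambda>r. \<phi> r powr (1 / CARD('d))) m X x \<omega>)"
      by (rule infinite_super[rotated])
  qed
qed

lemma infinite_iff_unbounded_snd:
  fixes S :: "('a \<times> nat) set"
  assumes "S \<subseteq> A \<times> UNIV" and "finite A"
  shows "infinite S \<longleftrightarrow> (\<forall>N. \<exists>t\<in>S. N \<le> snd t)"
proof -
  have "S \<subseteq> A \<times> snd ` S"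
    using assms(1) by force
  then have "finite S \<longleftrightarrow> finite (snd ` S)"
    using assms(2) finite_subset by blast
  then have "infinite S \<longleftrightarrow> (\<forall>N. \<exists>n\<ge>N. n \<in> snd ` S)"
    by (simp add: infinite_nat_iff_unbounded_le)
  then show ?thesis
    by force
qed

lemma sets_pair_infinite_hits:
  fixes M :: "'w measure" and X :: "nat \<Rightarrow> nat \<Rightarrow> 'w \<Rightarrow> real^'d"
  assumes measurable_X: "\<And>i n. i \<in> idx_set CARD('d) \<Longrightarrow> X i n \<in> borel_measurable M"
  shows "{p \<in> space (lborel \<Otimes>\<^sub>M M). fst p \<in> unit_cube \<longrightarrow> infinite (hits \<psi> m X (fst p) (snd p))}
    \<in> sets (lborel \<Otimes>\<^sub>M M)"
proof -
  \<comment> \<open>\<open>Y\<close> agrees with \<open>X\<close> on the index set but is measurable for every \<open>i\<close>.\<close>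
  define Y where "Y i n = (if i \<in> idx_set CARD('d) then X i n else (\<lambda>_. 0))" for i n
  have [measurable]: "Y i n \<in> borel_measurable M" for i n
    using measurable_X by (simp add: Y_def)
  have [measurable]: "fst \<in> borel_measurable (lborel \<Otimes>\<^sub>M M :: ((real^'d) \<times> 'w) measure)"
    using measurable_fst[of lborel M] by simp
  have [measurable]: "(\<lambda>p. tdist (fst p) (dyad_point j (dyad_index j (Y i n (snd p)))))
      \<in> borel_measurable (lborel \<Otimes>\<^sub>M M)" for i n j
    by (rule borel_measurable_continuous_Pair[OF _ _ continuous_on_tdist]) measurable
  have hits_iff: "(x \<in> unit_cube \<longrightarrow> infinite (hits \<psi> m X x \<omega>)) \<longleftrightarrow> (x \<in> unit_cube \<longrightarrow> (\<forall>N. \<exists>i\<in>idx_set CARD('d). \<exists>n. n \<in> Nset m i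
      \<and> tdist x (dyad_point (jgen m i n) (dyad_index (jgen m i n) (Y i n \<omega>))) < \<psi> ((1/2) ^ jgen m i n)
      \<and> N \<le> n))"
    for x \<omega>
    by (subst infinite_iff_unbounded_snd[OF _ finite_idx_set]) (auto simp: hits_def Y_def Bex_def)
  show ?thesis
    unfolding hits_iff by measurable
qed

lemma AE_null_sets_if_AE_pointwise:
  fixes M :: "'w measure" and P :: "'a :: euclidean_space \<Rightarrow> 'w \<Rightarrow> bool"
  assumes "sigma_finite_measure M"
    and measurable_P: "{p \<in> space (lborel \<Otimes>\<^sub>M M). P (fst p) (snd p)} \<in> sets (lborel \<Otimes>\<^sub>M M)"
    and pointwise: "\<And>x. AE \<omega> in M. P x \<omega>"
  shows "AE \<omega> in M. {x. \<not> P x \<omega>} \<in> null_sets lebesgue"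
proof -
  interpret pair_sigma_finite lborel M
    using assms(1) by (simp add: pair_sigma_finite_def sigma_finite_lborel)
  have "AE x in lborel. AE \<omega> in M. P x \<omega>"
    using pointwise by simp
  then have "AE \<omega> in M. AE x in lborel. P x \<omega>"
    by (subst AE_commute[OF measurable_P, symmetric])
  then show ?thesis
  proof (rule eventually_mono)
    fix \<omega> assume "AE x in lborel. P x \<omega>"
    then obtain N where N: "{x \<in> space lborel. \<not> P x \<omega>} \<subseteq> N"
      "emeasure lborel N = 0" "N \<in> sets lborel"
      by (rule AE_E)
    then have "N \<in> null_sets lebesgue"
      by (intro null_sets_completionI null_setsI)
    then show "{x. \<not> P x \<omega>} \<in> null_sets lebesgue"
      by (rule null_sets_completion_subset[rotated]) (use N(1) in auto)
  qed
qed

lemma AE_null_sets_unit_cube_diff_Lset: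
  fixes M :: "'w measure" and X :: "nat \<Rightarrow> nat \<Rightarrow> 'w \<Rightarrow> real^'d"
  assumes "prob_space M"
    and indep: "prob_space.indep_vars M (\<lambda>_. borel) (\<lambda>(i, n). X i n) (idx_set CARD('d) \<times> UNIV)"
    and uniform: "\<And>i n. i \<in> idx_set CARD('d) \<Longrightarrow>
      distributed M lborel (X i n) (\<lambda>x. indicator unit_cube x)"
    and "continuous_on {0..} \<phi>" and "\<phi> 0 = 0" and nonneg: "\<And>r. 0 \<le> r \<Longrightarrow> 0 \<le> \<phi> r"
    and "(\<lambda>r. r ^ CARD('d)) \<in> o[at_right 0](\<phi>)"
    and divergent: "\<not> (\<lambda>(i, j). real (m i j) * \<phi> ((1/2) ^ j)) summable_on (idx_set CARD('d) \<times> UNIV)"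
  shows "AE \<omega> in M. unit_cube - Lset (\<lambda>r. \<phi> r powr (1 / CARD('d))) m X \<omega> \<in> null_sets lebesgue"
proof -
  let ?\<psi> = "\<lambda>r. \<phi> r powr (1 / CARD('d))"
  obtain J where radius: "\<And>j. J \<le> j \<Longrightarrow>
      \<phi> ((1/2) ^ j) \<le> 1 \<and> 2 * CARD('d) * (1/2) ^ j < \<phi> ((1/2) ^ j) powr (1 / CARD('d))"
    using eventually_dyadic_radius[of \<phi> "CARD('d)"] assms(4-7) nonneg
    unfolding eventually_sequentially by auto
  have "AE \<omega> in M. {x. \<not> (x \<in> unit_cube \<longrightarrow> infinite (hits ?\<psi> m X x \<omega>))} \<in> null_sets lebesgue"
  proof (rule AE_null_sets_if_AE_pointwise)
    show "sigma_finite_measure M"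
      using \<open>prob_space M\<close> by (rule prob_space_imp_sigma_finite)
    show "{p \<in> space (lborel \<Otimes>\<^sub>M M). fst p \<in> unit_cube \<longrightarrow> infinite (hits ?\<psi> m X (fst p) (snd p))}
        \<in> sets (lborel \<Otimes>\<^sub>M M)"
      using distributed_measurable[OF uniform]
      by (intro sets_pair_infinite_hits) (simp add: measurable_lborel1)
    show "AE \<omega> in M. x \<in> unit_cube \<longrightarrow> infinite (hits ?\<psi> m X x \<omega>)" for x
      using AE_infinite_hits[OF \<open>prob_space M\<close> indep uniform nonneg radius divergent, where x=x]
      by (cases "x \<in> unit_cube") simp_all
  qed
  then show ?thesis
  proof (rule eventually_mono)
    fix \<omega>
    assume "{x. \<not> (x \<in> unit_cube \<longrightarrow> infinite (hits ?\<psi> m X x \<omega>))} \<in> null_sets lebesgue"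
    moreover have "unit_cube - Lset ?\<psi> m X \<omega> \<subseteq> {x. \<not> (x \<in> unit_cube \<longrightarrow> infinite (hits ?\<psi> m X x \<omega>))}"
      using infinite_hits_imp_mem_Lset[where \<psi>="?\<psi>" and m=m and X=X and \<omega>=\<omega>] by blast
    ultimately show "unit_cube - Lset ?\<psi> m X \<omega> \<in> null_sets lebesgue"
      by (rule null_sets_completion_subset[rotated])
  qed
qed

theorem lemma6:
  fixes M :: "'w measure" and X :: "nat \<Rightarrow> nat \<Rightarrow> 'w \<Rightarrow> real^'d"
    and m :: "nat \<Rightarrow> nat \<Rightarrow> nat" and \<phi> :: "real \<Rightarrow> real"
  assumes "prob_space M"
    and "prob_space.indep_vars M (\<lambda>_. borel) (\<lambda>(i, n). X i n) (idx_set CARD('d) \<times> UNIV)"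
    and "\<And>i n. i \<in> idx_set CARD('d) \<Longrightarrow>
           distributed M lborel (X i n) (\<lambda>x. indicator unit_cube x)"
    and "\<And>i j. i \<in> idx_set CARD('d) \<Longrightarrow> m i j \<le> 2 ^ (CARD('d) * j)"
    and "continuous_on {0..} \<phi>" and "mono_on {0..} \<phi>" and "\<phi> 0 = 0"
  shows "((\<lambda>(i, j). real (m i j) * \<phi> ((1/2)^j)) summable_on (idx_set CARD('d) \<times> UNIV)
           \<longrightarrow> (AE \<omega> in M. (\<lambda>(i, j, k). \<phi> ((1/2)^j)) summable_on Mset m X \<omega>))
       \<and> (\<not> (\<lambda>(i, j). real (m i j) * \<phi> ((1/2)^j)) summable_on (idx_set CARD('d) \<times> UNIV)
           \<and> (\<lambda>r. r ^ CARD('d)) \<in> o[at_right 0](\<phi>)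
           \<longrightarrow> (AE \<omega> in M. unit_cube - Lset (\<lambda>r. \<phi> r powr (1 / real CARD('d))) m X \<omega>
                  \<in> null_sets lebesgue))"
proof (intro conjI impI)
  have nonneg: "0 \<le> \<phi> r" if "0 \<le> r" for r
    using mono_onD[OF assms(6), of 0 r] that assms(7) by simp
  show "AE \<omega> in M. (\<lambda>(i, j, k). \<phi> ((1/2)^j)) summable_on Mset m X \<omega>"
    if "(\<lambda>(i, j). real (m i j) * \<phi> ((1/2)^j)) summable_on (idx_set CARD('d) \<times> UNIV)"
    by (intro always_eventually allI summable_on_Mset) (use that nonneg in auto)
  show "AE \<omega> in M. unit_cube - Lset (\<lambda>r. \<phi> r powr (1 / real CARD('d))) m X \<omega> \<in> null_sets lebesgue"
    if "\<not> (\<lambda>(i, j). real (m i j) * \<phi> ((1/2)^j)) summable_on (idx_set CARD('d) \<times> UNIV)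
      \<and> (\<lambda>r. r ^ CARD('d)) \<in> o[at_right 0](\<phi>)"
    using AE_null_sets_unit_cube_diff_Lset[OF assms(1-3,5,7) nonneg] that by blast
qed

end
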